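(* Let $\nu\in\mathbb{C}$ and $\mathrm{Re}(x)<\mathrm{Re}(\nu)$. Let $U$ be a Hankel-type contour in the $t$-plane that starts at $+\infty$ above the real axis, circles the origin counterclockwise, and returns to $+\infty$ below the real axis, such that $t^{-\nu}\big[\frac12(t-\frac1t)+1\big]^x$ vanishes at the endpoints of $U$. Define \[ y_\nu(x)=\int_U t^{-\nu-1}\Big[\frac12\Big(t-\frac1t\Big)+1\Big]^x\,dt . \] Then (i) $y_\nu$ satisfies the delay-difference equations \[ x\,\Delta y_\nu(x-1)+\nu y_\nu(x)-x\,y_{\nu-1}(x-1)=0,\qquad x\,\Delta y_\nu(x-1)-\nu y_\nu(x)+x\,y_{\nu+1}(x-1)=0; \] (ii) $y_\nu$ solves the difference Bessel equation of order $\nu$: \[ x(x-1)\Delta^2y(x-2)+x\Delta y(x-1)+x(x-1)y(x-2)-\nu^2y(x)=0 . \]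
   Context: $\Delta$ is the forward difference operator: $\Delta g(x)=g(x+1)-g(x)$, so $\Delta g(x-1)=g(x)-g(x-1)$ and $\Delta^2g=\Delta(\Delta g)$. *)

theory Defs
  imports "HOL-Complex_Analysis.Complex_Analysis"
begin

text \<open>Logarithm with branch cut along the non-negative real axis, argument in (0, 2 pi).
  This is the branch of log t used for t powers along a Hankel contour wrapping the
  positive real axis.\<close>
definition logU :: "complex \<Rightarrow> complex" where
  "logU t = Ln (- t) + \<i> * pi"

definition powU :: "complex \<Rightarrow> complex \<Rightarrow> complex" where
  "powU t a = exp (a * logU t)"

definition wB :: "complex \<Rightarrow> complex" where
  "wB t = (t - 1 / t) / 2 + 1"

definition hank_integrand :: "complex \<Rightarrow> complex \<Rightarrow> complex \<Rightarrow> complex" where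
  "hank_integrand \<nu> x t = powU t (- \<nu> - 1) * (wB t powr x)"

text \<open>Domain of holomorphy of the integrand: the plane cut along [0, +inf) and (-inf, -1-sqrt 2].\<close>
definition hank_domain :: "complex set" where
  "hank_domain = - {t. Im t = 0 \<and> (0 \<le> Re t \<or> Re t \<le> - 1 - sqrt 2)}"

text \<open>A Hankel-type contour, parametrised by the whole real line: starts at +inf above the
  real axis (parameter to -inf), circles the origin inside the cut plane (hence
  counterclockwise), and returns to +inf below the real axis (parameter to +inf).\<close>
definition hankel_contour :: "(real \<Rightarrow> complex) \<Rightarrow> bool" where
  "hankel_contour \<gamma> \<longleftrightarrow>
     (\<forall>R. \<gamma> piecewise_C1_differentiable_on {-R..R}) \<and>
     (\<forall>s. \<gamma> s \<in> hank_domain) \<and>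
     filterlim (\<lambda>s. Re (\<gamma> s)) at_top at_bot \<and>
     filterlim (\<lambda>s. Re (\<gamma> s)) at_top at_top \<and>
     (\<forall>\<^sub>F s in at_bot. Im (\<gamma> s) > 0) \<and>
     (\<forall>\<^sub>F s in at_top. Im (\<gamma> s) < 0)"

definition hseg :: "(real \<Rightarrow> complex) \<Rightarrow> real \<Rightarrow> real \<Rightarrow> complex" where
  "hseg \<gamma> R = (\<lambda>s. \<gamma> (- R + 2 * R * s))"

definition hank_y :: "(real \<Rightarrow> complex) \<Rightarrow> complex \<Rightarrow> complex \<Rightarrow> complex" where
  "hank_y \<gamma> \<nu> x = Lim at_top (\<lambda>R. contour_integral (hseg \<gamma> R) (hank_integrand \<nu> x))"

end

theory Submission
  imports Defs
begin

(* Write F(nu, x, t) = t^(-nu-1) w(t)^x with w(t) = (t - 1/t)/2 + 1, so that y_nu(x) is the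
   integral of F(nu, x) over U.  Since w(t) = 1 + t/2 - 1/(2t), pointwise
     F(nu, x) = F(nu, x-1) + (F(nu-1, x-1) - F(nu+1, x-1)) / 2,
   and the boundary term t^(-nu) w^x = F(nu-1, x) has derivative
     -nu F(nu, x) + x/2 (F(nu-1, x-1) + F(nu+1, x-1)).
   Integrating over U, where the boundary term vanishes at both ends because Re x < Re nu, gives
     y_nu(x) = y_nu(x-1) + (y_(nu-1)(x-1) - y_(nu+1)(x-1)) / 2   and
     nu y_nu(x) = x/2 (y_(nu-1)(x-1) + y_(nu+1)(x-1)).
   Linear combinations of these are the two delay-difference equations, and eliminating y_(nu-1)
   between the first one at (nu, x), at (nu, x-1) and the second one at (nu-1, x-1) gives the
   Bessel equation.

   The analytic point is that the improper integral y_nu(x) exists.  The integrand is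
   O(|t|^(Re x - Re nu - 1)), but U is only piecewise C1, with no control on its length, so its
   two tails are evaluated through primitives of F on the quadrants Re t > 5, +-Im t > 0.  Along
   L-shaped paths the decay bounds the oscillation of such a primitive far out in its quadrant,
   so it converges at infinity by the Cauchy criterion. *)

section \<open>The cut plane and the integrand\<close>

lemma hank_domain_iff:
  "t \<in> hank_domain \<longleftrightarrow> Im t \<noteq> 0 \<or> (- 1 - sqrt 2 < Re t \<and> Re t < 0)"
  by (auto simp: hank_domain_def)

lemma hank_domain_nonzero: "t \<in> hank_domain \<Longrightarrow> t \<noteq> 0"
  by (auto simp: hank_domain_iff)

lemma uminus_hank_domain_notin_nonpos_Reals: "t \<in> hank_domain \<Longrightarrow> - t \<notin> \<real>\<^sub>\<le>\<^sub>0"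
  by (auto simp: hank_domain_iff complex_nonpos_Reals_iff)

lemma wB_notin_nonpos_Reals:
  assumes "t \<in> hank_domain"
  shows "wB t \<notin> \<real>\<^sub>\<le>\<^sub>0"
proof (cases "Im t = 0")
  case False
  have "Im (wB t) = Im t * (1 + 1 / (cmod t)\<^sup>2) / 2"
    by (simp add: wB_def Im_divide cmod_power2 algebra_simps)
  moreover have "1 + 1 / (cmod t)\<^sup>2 > 0"
    by (simp add: add_pos_nonneg)
  ultimately have "Im (wB t) \<noteq> 0"
    using False by (metis divide_eq_0_iff mult_eq_0_iff order_less_irrefl zero_neq_numeral)
  then show ?thesis
    by (auto simp: complex_nonpos_Reals_iff)
next
  case True
  define r where "r = Re t"
  have t: "t = of_real r"
    using True by (simp add: r_def complex_eq_iff)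
  have r: "- 1 - sqrt 2 < r" "r < 0"
    using assms True by (auto simp: hank_domain_iff r_def)
  have "1 < sqrt 2"
    by simp
  then have "sqrt ((r + 1)\<^sup>2) < sqrt 2"
    using r unfolding real_sqrt_abs abs_less_iff by linarith
  then have "r * r + 2 * r - 1 < 0"
    by (simp add: power2_eq_square algebra_simps)
  then have "(r - 1 / r) / 2 + 1 > 0"
    using r by (simp add: field_simps)
  moreover have "wB t = of_real ((r - 1 / r) / 2 + 1)"
    by (simp add: wB_def t)
  ultimately show ?thesis
    by (auto simp: complex_nonpos_Reals_iff)
qed

lemma wB_nonzero: "t \<in> hank_domain \<Longrightarrow> wB t \<noteq> 0"
  using wB_notin_nonpos_Reals by fastforce

lemma open_hank_domain: "open hank_domain"
proof -
  have "hank_domain = - ({t. Im t = 0} \<inter> ({t. 0 \<le> Re t} \<union> {t. Re t \<le> - 1 - sqrt 2}))"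
    by (auto simp: hank_domain_def)
  also have "open \<dots>"
    by (intro open_Compl closed_Un closed_Int closed_Collect_eq closed_Collect_le continuous_intros)
  finally show ?thesis .
qed

lemma exp_logU: "t \<noteq> 0 \<Longrightarrow> exp (logU t) = t"
  by (simp add: logU_def exp_add)

lemma hank_integrand_eq_exp:
  "t \<in> hank_domain \<Longrightarrow> hank_integrand \<mu> z t = exp ((- \<mu> - 1) * logU t + z * Ln (wB t))"
  using wB_nonzero by (simp add: hank_integrand_def powU_def powr_def exp_add)

lemma hank_integrand_eq_pred_x:
  assumes "t \<in> hank_domain"
  shows "hank_integrand \<mu> z t = hank_integrand \<mu> (z - 1) t * wB t"
proof -
  have "hank_integrand \<mu> z t = exp (((- \<mu> - 1) * logU t + (z - 1) * Ln (wB t)) + Ln (wB t))"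
    by (simp add: hank_integrand_eq_exp[OF assms] algebra_simps)
  then show ?thesis
    by (simp add: exp_add hank_integrand_eq_exp[OF assms] wB_nonzero[OF assms])
qed

lemma hank_integrand_pred_nu:
  assumes "t \<in> hank_domain"
  shows "hank_integrand (\<mu> - 1) z t = hank_integrand \<mu> z t * t"
proof -
  have "hank_integrand (\<mu> - 1) z t = exp (((- \<mu> - 1) * logU t + z * Ln (wB t)) + logU t)"
    by (simp add: hank_integrand_eq_exp[OF assms] algebra_simps)
  then show ?thesis
    by (simp add: exp_add hank_integrand_eq_exp[OF assms] exp_logU hank_domain_nonzero[OF assms])
qed

lemma hank_integrand_succ_nu:
  "t \<in> hank_domain \<Longrightarrow> hank_integrand (\<mu> + 1) z t = hank_integrand \<mu> z t / t"
  using hank_integrand_pred_nu[of t "\<mu> + 1" z] hank_domain_nonzero[of t] by simp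

lemma hank_integrand_recurrence:
  assumes "t \<in> hank_domain"
  shows "hank_integrand \<mu> z t = hank_integrand \<mu> (z - 1) t
           + (hank_integrand (\<mu> - 1) (z - 1) t - hank_integrand (\<mu> + 1) (z - 1) t) / 2"
  unfolding hank_integrand_eq_pred_x[OF assms, of \<mu> z]
    hank_integrand_pred_nu[OF assms, of \<mu> "z - 1"] hank_integrand_succ_nu[OF assms, of \<mu> "z - 1"]
  by (simp add: wB_def ring_distribs diff_divide_distrib)

lemma holomorphic_hank_integrand: "hank_integrand \<mu> z holomorphic_on hank_domain"
proof -
  have "(\<lambda>t. exp ((- \<mu> - 1) * logU t + z * Ln (wB t))) holomorphic_on hank_domain"
    unfolding logU_def wB_def
    using uminus_hank_domain_notin_nonpos_Reals wB_notin_nonpos_Reals hank_domain_nonzero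
    by (intro holomorphic_intros) (auto simp: wB_def)
  then show ?thesis
    by (rule holomorphic_transform) (simp add: hank_integrand_eq_exp)
qed

lemma has_field_derivative_logU:
  "- t \<notin> \<real>\<^sub>\<le>\<^sub>0 \<Longrightarrow> (logU has_field_derivative 1 / t) (at t)"
  unfolding logU_def by (auto intro!: derivative_eq_intros simp: divide_simps)

lemma has_field_derivative_wB:
  "t \<noteq> 0 \<Longrightarrow> (wB has_field_derivative (1 + 1 / t\<^sup>2) / 2) (at t)"
  unfolding wB_def by (auto intro!: derivative_eq_intros simp: field_simps power2_eq_square)

(* hank_integrand (mu - 1) z t = t^(-mu) w(t)^z is the boundary term whose vanishing at the ends
   of U is assumed in the theorem. *)
lemma has_field_derivative_hank_integrand_pred_nu:
  assumes t: "t \<in> hank_domain"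
  shows "(hank_integrand (\<mu> - 1) z has_field_derivative
           - \<mu> * hank_integrand \<mu> z t
           + z / 2 * (hank_integrand (\<mu> - 1) (z - 1) t + hank_integrand (\<mu> + 1) (z - 1) t)) (at t)"
proof -
  define E where "E = (\<lambda>s. exp (- \<mu> * logU s + z * Ln (wB s)))"
  have E_eq: "E s = hank_integrand (\<mu> - 1) z s" if "s \<in> hank_domain" for s
    using hank_integrand_eq_exp[OF that, of "\<mu> - 1" z] by (simp add: E_def)
  have "((\<lambda>s. Ln (wB s)) has_field_derivative inverse (wB t) * ((1 + 1 / t\<^sup>2) / 2)) (at t)"
    using has_field_derivative_Ln[OF wB_notin_nonpos_Reals[OF t]]
      has_field_derivative_wB[OF hank_domain_nonzero[OF t]]
    by (rule DERIV_chain2)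
  then have "((\<lambda>s. - \<mu> * logU s + z * Ln (wB s)) has_field_derivative
      - \<mu> * (1 / t) + z * (inverse (wB t) * ((1 + 1 / t\<^sup>2) / 2))) (at t)"
    using has_field_derivative_logU[OF uminus_hank_domain_notin_nonpos_Reals[OF t]]
    by (intro DERIV_add DERIV_cmult)
  from DERIV_chain2[OF DERIV_exp this]
  have "(E has_field_derivative
      E t * (- \<mu> * (1 / t) + z * (inverse (wB t) * ((1 + 1 / t\<^sup>2) / 2)))) (at t)"
    by (simp only: E_def)
  then have "(hank_integrand (\<mu> - 1) z has_field_derivative
      E t * (- \<mu> * (1 / t) + z * (inverse (wB t) * ((1 + 1 / t\<^sup>2) / 2)))) (at t)"
    by (rule has_field_derivative_transform_within_open[OF _ open_hank_domain t E_eq])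
  moreover
  have "E t * (- \<mu> * (1 / t) + z * (inverse (wB t) * ((1 + 1 / t\<^sup>2) / 2)))
      = - \<mu> * hank_integrand \<mu> z t
        + z / 2 * (hank_integrand (\<mu> - 1) (z - 1) t + hank_integrand (\<mu> + 1) (z - 1) t)"
    unfolding E_eq[OF t] hank_integrand_pred_nu[OF t, of \<mu> z]
      hank_integrand_pred_nu[OF t, of \<mu> "z - 1"] hank_integrand_succ_nu[OF t, of \<mu> "z - 1"]
      hank_integrand_eq_pred_x[OF t, of \<mu> z]
    using hank_domain_nonzero[OF t] wB_nonzero[OF t]
    by (simp add: field_simps power2_eq_square)
  ultimately show ?thesis
    by simp
qed

section \<open>Growth of the integrand\<close>

lemma neg_mult_le_abs_mult:
  fixes x y M :: real
  shows "\<bar>y\<bar> \<le> M \<Longrightarrow> - x * y \<le> \<bar>x\<bar> * M"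
  by (metis abs_ge_minus_self abs_ge_zero abs_mult mult_left_mono mult_minus_left order_trans)

lemma norm_powU_le: "t \<noteq> 0 \<Longrightarrow> norm (powU t a) \<le> exp (2 * pi * \<bar>Im a\<bar>) * norm t powr Re a"
proof -
  assume t: "t \<noteq> 0"
  have "\<bar>Im (logU t)\<bar> \<le> 2 * pi"
    using t Im_Ln_le_pi[of "- t"] mpi_less_Im_Ln[of "- t"] by (simp add: logU_def)
  then have "- Im a * Im (logU t) \<le> \<bar>Im a\<bar> * (2 * pi)"
    by (rule neg_mult_le_abs_mult)
  moreover have "Re (logU t) = ln (norm t)"
    using t by (simp add: logU_def)
  ultimately have "norm (powU t a) \<le> exp (2 * pi * \<bar>Im a\<bar> + Re a * ln (norm t))"
    by (simp add: powU_def mult_ac)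
  also have "\<dots> = exp (2 * pi * \<bar>Im a\<bar>) * norm t powr Re a"
    using t by (simp add: powr_def exp_add)
  finally show ?thesis .
qed

lemma norm_powr_le: "norm (w powr z) \<le> exp (pi * \<bar>Im z\<bar>) * norm w powr Re z"
proof -
  have "- Im z * Arg w \<le> \<bar>Im z\<bar> * pi"
    using Arg_le_pi[of w] mpi_less_Arg[of w] by (intro neg_mult_le_abs_mult) auto
  then show ?thesis
    by (simp add: norm_powr_complex mult.commute mult_left_mono)
qed

lemma powr_le_scaled_powr:
  fixes x y c p :: real
  assumes "0 < x" "1 \<le> c" "x / c \<le> y" "y \<le> c * x"
  shows "y powr p \<le> c powr \<bar>p\<bar> * x powr p"
proof (cases "0 \<le> p")
  case True
  have "0 \<le> y"
    using assms by (smt (verit) divide_nonneg_nonneg)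
  then have "y powr p \<le> (c * x) powr p"
    using assms True by (intro powr_mono2) auto
  then show ?thesis
    using assms True by (simp add: powr_mult)
next
  case False
  have "0 < x / c"
    using assms by simp
  then have "y powr p \<le> (x / c) powr p"
    using assms False by (intro powr_mono2') auto
  then show ?thesis
    using assms False by (simp add: powr_divide powr_minus_divide)
qed

lemma norm_wB_bounds:
  assumes "5 \<le> norm t"
  shows "norm t / 4 \<le> norm (wB t)" "norm (wB t) \<le> 4 * norm t"
proof -
  define u where "u = 1 - 1 / (2 * t)"
  have "norm (1 / (2 * t)) \<le> 1 / 10"
    using assms by (simp add: norm_divide norm_mult divide_simps)
  then have "norm u \<le> 11 / 10"
    using norm_triangle_ineq4[of 1 "1 / (2 * t)"] by (simp add: u_def)
  moreover have "wB t = t / 2 + u"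
    using assms by (auto simp: wB_def u_def field_simps)
  ultimately show "norm t / 4 \<le> norm (wB t)" "norm (wB t) \<le> 4 * norm t"
    using norm_triangle_ineq[of "t / 2" u] norm_diff_ineq[of "t / 2" u] assms
    by (simp_all add: norm_divide)
qed

lemma norm_hank_integrand_le:
  obtains C where "C > 0"
    "\<And>t. 5 \<le> norm t \<Longrightarrow> norm (hank_integrand \<mu> z t) \<le> C * norm t powr (Re z - Re \<mu> - 1)"
proof
  define C where "C = exp (2 * pi * \<bar>Im \<mu>\<bar>) * (exp (pi * \<bar>Im z\<bar>) * 4 powr \<bar>Re z\<bar>)"
  show "C > 0"
    by (simp add: C_def)
  fix t :: complex
  assume t: "5 \<le> norm t"
  have "norm (wB t) powr Re z \<le> 4 powr \<bar>Re z\<bar> * norm t powr Re z"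
    using norm_wB_bounds[OF t] t by (intro powr_le_scaled_powr) auto
  then have "norm (wB t powr z) \<le> exp (pi * \<bar>Im z\<bar>) * (4 powr \<bar>Re z\<bar> * norm t powr Re z)"
    by (rule order_trans[OF norm_powr_le mult_left_mono]) simp
  moreover have "norm (powU t (- \<mu> - 1)) \<le> exp (2 * pi * \<bar>Im \<mu>\<bar>) * norm t powr (- Re \<mu> - 1)"
    using norm_powU_le[of t "- \<mu> - 1"] t by fastforce
  ultimately have "norm (hank_integrand \<mu> z t)
      \<le> exp (2 * pi * \<bar>Im \<mu>\<bar>) * norm t powr (- Re \<mu> - 1)
         * (exp (pi * \<bar>Im z\<bar>) * (4 powr \<bar>Re z\<bar> * norm t powr Re z))"
    unfolding hank_integrand_def norm_mult by (intro mult_mono) auto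
  also have "\<dots> = C * norm t powr ((- Re \<mu> - 1) + Re z)"
    by (simp add: C_def powr_add mult_ac)
  also have "(- Re \<mu> - 1) + Re z = Re z - Re \<mu> - 1"
    by simp
  finally show "norm (hank_integrand \<mu> z t) \<le> C * norm t powr (Re z - Re \<mu> - 1)" .
qed

section \<open>Primitives on quadrants\<close>

lemma has_real_derivative_shifted_powr_antiderivative:
  fixes c e s :: real
  assumes "0 < c + s" "e \<noteq> - 1"
  shows "((\<lambda>s. (c + s) powr (e + 1) / (e + 1)) has_real_derivative (c + s) powr e) (at s)"
proof -
  have "((\<lambda>s. (c + s) powr (e + 1) / (e + 1)) has_real_derivative
      (e + 1) * (c + s) powr (e + 1 - 1) * 1 / (e + 1)) (at s)"
    using assms(1) by (intro DERIV_cdivide DERIV_chain2[OF has_real_derivative_powr])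
      (auto intro!: derivative_eq_intros)
  then show ?thesis
    using assms(2) by simp
qed

lemma norm_diff_le_of_ray_derivative_bound:
  fixes G f :: "complex \<Rightarrow> complex" and u c e C :: real
  assumes u: "0 \<le> u" and c: "0 < c" and e: "e < -1" and C: "0 \<le> C" and d: "norm d = 1"
    and G_deriv: "\<And>s. 0 \<le> s \<Longrightarrow> s \<le> u \<Longrightarrow>
      (G has_field_derivative f (p + of_real s * d)) (at (p + of_real s * d))"
    and f_bound: "\<And>s. 0 \<le> s \<Longrightarrow> s \<le> u \<Longrightarrow> norm (f (p + of_real s * d)) \<le> C * (c + s) powr e"
  shows "norm (G (p + of_real u * d) - G p) \<le> C * c powr (e + 1) / - (e + 1)"
proof (cases "u = 0")
  case True
  then show ?thesis
    using C e by (simp add: divide_nonneg_neg)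
next
  case False
  define g where "g = (\<lambda>s. G (p + of_real s * d))"
  define \<phi> where "\<phi> = (\<lambda>s. C * (c + s) powr (e + 1) / (e + 1))"
  have g': "(g has_vector_derivative d * f (p + of_real s * d)) (at s)" if "0 \<le> s" "s \<le> u" for s
  proof -
    have "((\<lambda>s. p + of_real s * d) has_vector_derivative d) (at s)"
      by (auto intro!: derivative_eq_intros simp: has_real_derivative_iff_has_vector_derivative
          has_vector_derivative_def scaleR_conv_of_real)
    from field_vector_diff_chain_at[OF this G_deriv[OF that]] show ?thesis
      by (simp add: g_def o_def)
  qed
  have \<phi>': "(\<phi> has_vector_derivative C * (c + s) powr e) (at s)" if "0 \<le> s" for s
    using DERIV_cmult[OF has_real_derivative_shifted_powr_antiderivative, of c s e C] c e that
    by (simp add: \<phi>_def has_real_derivative_iff_has_vector_derivative)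
  have "norm (g u - g 0) \<le> \<phi> u - \<phi> 0"
  proof (rule differentiable_bound_general)
    show "continuous_on {0..u} g" "continuous_on {0..u} \<phi>"
      using g' \<phi>' by (auto intro!: continuous_at_imp_continuous_on has_vector_derivative_continuous)
    show "norm (d * f (p + of_real s * d)) \<le> C * (c + s) powr e" if "0 < s" "s < u" for s
      using f_bound[of s] that d by (simp add: norm_mult)
  qed (use u False g' \<phi>' in auto)
  also have "\<dots> \<le> C * c powr (e + 1) / - (e + 1)"
  proof -
    have "\<phi> u \<le> 0"
      using C e by (simp add: \<phi>_def divide_nonneg_neg)
    moreover have "- \<phi> 0 = C * c powr (e + 1) / - (e + 1)"
      by (simp only: \<phi>_def divide_minus_right add_0_right)
    ultimately show ?thesis
      by linarith
  qed
  finally show ?thesis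
    by (simp add: g_def)
qed

definition right_quadrant :: "real \<Rightarrow> real \<Rightarrow> complex set" where
  "right_quadrant \<sigma> a = {q. a < Re q \<and> 0 < \<sigma> * Im q}"

lemma open_right_quadrant: "open (right_quadrant \<sigma> a)"
  unfolding right_quadrant_def by (intro open_Collect_conj open_Collect_less continuous_intros)

lemma convex_right_quadrant: "convex (right_quadrant \<sigma> a)"
proof -
  have "right_quadrant \<sigma> a = {q. a < Re q} \<inter>
      (if 0 < \<sigma> then {q. 0 < Im q} else if \<sigma> < 0 then {q. Im q < 0} else {})"
    by (auto simp: right_quadrant_def zero_less_mult_iff)
  then show ?thesis
    by (simp add: convex_Int convex_halfspace_Re_gt convex_halfspace_Im_gt convex_halfspace_Im_lt)
qed

lemma right_quadrant_subset_hank_domain: "right_quadrant \<sigma> a \<subseteq> hank_domain"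
  by (auto simp: right_quadrant_def hank_domain_def)

lemma holomorphic_primitive_on_right_quadrant:
  assumes "f holomorphic_on hank_domain"
  obtains G where "\<And>q. q \<in> right_quadrant \<sigma> a \<Longrightarrow> (G has_field_derivative f q) (at q)"
proof -
  obtain G where "\<And>q. q \<in> right_quadrant \<sigma> a \<Longrightarrow>
      (G has_field_derivative f q) (at q within right_quadrant \<sigma> a)"
    using holomorphic_convex_primitive'[OF convex_right_quadrant[of \<sigma> a] open_right_quadrant
        holomorphic_on_subset[OF assms right_quadrant_subset_hank_domain]] by blast
  then show ?thesis
    using that at_within_open[OF _ open_right_quadrant] by metis
qed

lemma right_quadrant_ray:
  assumes \<sigma>: "\<bar>\<sigma>\<bar> = 1" and p: "p \<in> right_quadrant \<sigma> a" "0 < Re p"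
    and d: "d = 1 \<or> d = \<sigma> * \<i>" and s: "0 \<le> s"
  shows "p + s * d \<in> right_quadrant \<sigma> a" "(Re p + s) / 2 \<le> norm (p + s * d)"
proof -
  have "Re (p + s * d) = Re p + s \<and> Im (p + s * d) = Im p
      \<or> Re (p + s * d) = Re p \<and> \<sigma> * Im (p + s * d) = \<sigma> * Im p + s"
    using d \<sigma> by (auto simp: abs_if algebra_simps split: if_splits)
  then show "p + s * d \<in> right_quadrant \<sigma> a" "(Re p + s) / 2 \<le> norm (p + s * d)"
    using p s \<sigma> complex_Re_le_cmod[of "p + s * d"] abs_Im_le_cmod[of "p + s * d"]
    by (auto simp: right_quadrant_def abs_if split: if_splits)
qed

(* The integral of C (s/2) powr e over [K, infinity). *)
definition powr_tail_bound :: "real \<Rightarrow> real \<Rightarrow> real \<Rightarrow> real" where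
  "powr_tail_bound C e K = C * 2 powr - e * K powr (e + 1) / - (e + 1)"

lemma powr_tail_bound_antimono:
  assumes "e < -1" "0 \<le> C" "0 < K" "K \<le> x"
  shows "powr_tail_bound C e x \<le> powr_tail_bound C e K"
proof -
  have "x powr (e + 1) \<le> K powr (e + 1)"
    using assms by (intro powr_mono2') auto
  then show ?thesis
    unfolding powr_tail_bound_def using assms(1,2) by (intro divide_right_mono mult_left_mono) auto
qed

lemma tendsto_powr_tail_bound: "e < -1 \<Longrightarrow> (powr_tail_bound C e \<longlongrightarrow> 0) at_top"
  unfolding powr_tail_bound_def
  by (intro tendsto_mult_right_zero tendsto_divide_zero tendsto_neg_powr filterlim_ident) auto

context
  fixes \<sigma> a C e :: real and G F :: "complex \<Rightarrow> complex"
  assumes \<sigma>: "\<bar>\<sigma>\<bar> = 1" and e: "e < -1" and C: "0 \<le> C"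
    and G_deriv: "\<And>q. q \<in> right_quadrant \<sigma> a \<Longrightarrow> (G has_field_derivative F q) (at q)"
    and F_bound: "\<And>q. q \<in> right_quadrant \<sigma> a \<Longrightarrow> norm (F q) \<le> C * norm q powr e"
begin

lemma norm_primitive_ray_le:
  fixes u :: real
  assumes p: "p \<in> right_quadrant \<sigma> a" "0 < Re p" and d: "d = 1 \<or> d = \<sigma> * \<i>" and u: "0 \<le> u"
  shows "norm (G (p + of_real u * d) - G p) \<le> powr_tail_bound C e (Re p)"
  unfolding powr_tail_bound_def
proof (rule norm_diff_le_of_ray_derivative_bound[OF u p(2) e])
  show "0 \<le> C * 2 powr - e" "norm d = 1"
    using C d \<sigma> by (auto simp: norm_mult)
  fix s :: real
  assume s: "0 \<le> s"
  note q = right_quadrant_ray[OF \<sigma> p d s]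
  show "(G has_field_derivative F (p + s * d)) (at (p + s * d))"
    by (rule G_deriv[OF q(1)])
  have "norm (p + s * d) powr e \<le> ((Re p + s) / 2) powr e"
    using q(2) p(2) s e by (intro powr_mono2') auto
  also have "\<dots> = 2 powr - e * (Re p + s) powr e"
    by (simp add: powr_divide powr_minus_divide)
  finally show "norm (F (p + s * d)) \<le> C * 2 powr - e * (Re p + s) powr e"
    using F_bound[OF q(1)] C by (auto simp: mult.assoc intro: order_trans mult_left_mono)
qed

lemma norm_primitive_corner_le:
  assumes p: "p \<in> right_quadrant \<sigma> a" "0 < Re p"
    and m: "Re p \<le> Re m" "\<sigma> * Im p \<le> \<sigma> * Im m"
  shows "norm (G m - G p) \<le> 2 * powr_tail_bound C e (Re p)"
proof -
  define c where "c = p + of_real (Re m - Re p) * 1"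
  have c: "c \<in> right_quadrant \<sigma> a" "Re p \<le> Re c"
    using right_quadrant_ray[OF \<sigma> p, of 1 "Re m - Re p"] m by (auto simp: c_def)
  define h where "h = \<sigma> * (Im m - Im p)"
  have "\<sigma> = 1 \<or> \<sigma> = -1"
    using \<sigma> by auto
  then have m_eq: "m = c + of_real h * (\<sigma> * \<i>)"
    by (auto simp: c_def h_def complex_eq_iff)
  have "norm (G c - G p) \<le> powr_tail_bound C e (Re p)"
    unfolding c_def using p m by (intro norm_primitive_ray_le) auto
  moreover have "norm (G m - G c) \<le> powr_tail_bound C e (Re c)"
    unfolding m_eq using c p m by (intro norm_primitive_ray_le) (auto simp: h_def algebra_simps)
  moreover have "powr_tail_bound C e (Re c) \<le> powr_tail_bound C e (Re p)"
    using c p e C by (intro powr_tail_bound_antimono) auto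
  ultimately show ?thesis
    using norm_triangle_ineq[of "G m - G c" "G c - G p"] by simp
qed

lemma norm_primitive_diff_le:
  assumes t: "t \<in> right_quadrant \<sigma> a" "K \<le> Re t" and t': "t' \<in> right_quadrant \<sigma> a" "K \<le> Re t'"
    and K: "0 < K"
  shows "norm (G t - G t') \<le> 4 * powr_tail_bound C e K"
proof -
  define m where "m = Complex (max (Re t) (Re t')) (\<sigma> * max (\<sigma> * Im t) (\<sigma> * Im t'))"
  have "\<sigma> = 1 \<or> \<sigma> = -1"
    using \<sigma> by auto
  then have Im_m: "\<sigma> * Im m = max (\<sigma> * Im t) (\<sigma> * Im t')"
    by (auto simp: m_def)
  have Re_m: "Re m = max (Re t) (Re t')"
    by (simp add: m_def)
  have bound: "norm (G m - G p) \<le> 2 * powr_tail_bound C e K" if "p \<in> {t, t'}" for p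
  proof -
    have p: "p \<in> right_quadrant \<sigma> a" "K \<le> Re p"
      using that t t' by auto
    have "norm (G m - G p) \<le> 2 * powr_tail_bound C e (Re p)"
      using p K that by (intro norm_primitive_corner_le) (auto simp: Re_m Im_m)
    also have "\<dots> \<le> 2 * powr_tail_bound C e K"
      using p K C e powr_tail_bound_antimono by simp
    finally show ?thesis .
  qed
  show ?thesis
    using bound[of t] bound[of t'] norm_triangle_ineq4[of "G m - G t'" "G m - G t"]
    by (simp add: norm_minus_commute)
qed

lemma convergent_primitive_along:
  assumes "filterlim (\<lambda>s. Re (\<gamma> s)) at_top F'" "eventually (\<lambda>s. \<gamma> s \<in> right_quadrant \<sigma> a) F'"
    and "F' \<noteq> bot"
  shows "\<exists>L. ((\<lambda>s. G (\<gamma> s)) \<longlongrightarrow> L) F'"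
proof -
  define B where "B K = 4 * powr_tail_bound C e K" for K
  have "(B \<longlongrightarrow> 0) at_top"
    unfolding B_def using e by (intro tendsto_mult_right_zero tendsto_powr_tail_bound)
  have cauchy: "cauchy_filter (filtermap (\<lambda>s. G (\<gamma> s)) F')"
    unfolding cauchy_filter_metric_filtermap
  proof (intro allI impI)
    fix \<epsilon> :: real
    assume "0 < \<epsilon>"
    then have "eventually (\<lambda>K. 0 < K \<and> B K < \<epsilon>) at_top"
      by (intro eventually_conj eventually_gt_at_top order_tendstoD(2)[OF \<open>(B \<longlongrightarrow> 0) at_top\<close>])
    then obtain K where K: "0 < K" "B K < \<epsilon>"
      unfolding eventually_at_top_linorder by auto
    define P where "P s \<longleftrightarrow> \<gamma> s \<in> right_quadrant \<sigma> a \<and> K \<le> Re (\<gamma> s)" for s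
    show "\<exists>P. eventually P F' \<and> (\<forall>s s'. P s \<and> P s' \<longrightarrow> dist (G (\<gamma> s)) (G (\<gamma> s')) < \<epsilon>)"
    proof (intro exI[of _ P] conjI allI impI)
      have "eventually (\<lambda>s. K \<le> Re (\<gamma> s)) F'"
        using assms(1) by (simp add: filterlim_at_top)
      with assms(2) show "eventually P F'"
        unfolding P_def by (rule eventually_conj)
      fix s s'
      assume "P s \<and> P s'"
      then have "norm (G (\<gamma> s) - G (\<gamma> s')) \<le> B K"
        unfolding B_def P_def using K(1) by (intro norm_primitive_diff_le) auto
      then show "dist (G (\<gamma> s)) (G (\<gamma> s')) < \<epsilon>"
        using K(2) by (simp add: dist_norm)
    qed
  qed
  have "filtermap (\<lambda>s. G (\<gamma> s)) F' \<noteq> bot"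
    using assms(3) by (simp add: filtermap_bot_iff)
  then obtain L where "filtermap (\<lambda>s. G (\<gamma> s)) F' \<le> nhds L"
    using cauchy_filter_complete_converges[OF cauchy complete_UNIV] by auto
  then show ?thesis
    by (auto simp: filterlim_def)
qed

end

section \<open>Pieces of the contour\<close>

definition contour_piece :: "(real \<Rightarrow> complex) \<Rightarrow> real \<Rightarrow> real \<Rightarrow> real \<Rightarrow> complex" where
  "contour_piece \<gamma> a b = (\<lambda>s. \<gamma> (a + (b - a) * s))"

lemma hseg_eq_contour_piece: "hseg \<gamma> R = contour_piece \<gamma> (- R) R"
  by (simp add: hseg_def contour_piece_def)

lemma subpath_contour_piece:
  "subpath u v (contour_piece \<gamma> a b) = contour_piece \<gamma> (a + (b - a) * u) (a + (b - a) * v)"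
  by (simp add: subpath_def contour_piece_def algebra_simps)

lemma path_image_contour_piece:
  assumes "a \<le> b"
  shows "path_image (contour_piece \<gamma> a b) = \<gamma> ` {a..b}"
proof -
  have "(\<lambda>s. a + (b - a) * s) ` {0..1} = {a..b}"
    using assms image_affinity_atLeastAtMost[of "b - a" a 0 1] by (simp add: add.commute)
  then show ?thesis
    unfolding path_image_def contour_piece_def by (metis image_image)
qed

lemma valid_path_contour_piece:
  assumes "hankel_contour \<gamma>" "a \<le> b"
  shows "valid_path (contour_piece \<gamma> a b)"
proof -
  define R where "R = max \<bar>a\<bar> \<bar>b\<bar>"
  have "\<gamma> piecewise_C1_differentiable_on {- R..R}"
    using assms(1) by (simp add: hankel_contour_def)
  moreover have "(\<lambda>s. (b - a) * s + a) ` {0..1} \<subseteq> {- R..R}"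
    using assms(2) by (auto simp: image_affinity_atLeastAtMost R_def)
  ultimately have "\<gamma> piecewise_C1_differentiable_on (\<lambda>s. (b - a) * s + a) ` {0..1}"
    by (rule piecewise_C1_differentiable_on_subset)
  from piecewise_C1_differentiable_affine[OF this] show ?thesis
    by (simp add: valid_path_def contour_piece_def o_def add.commute)
qed

lemma contour_integrable_on_contour_piece:
  assumes "hankel_contour \<gamma>" "a \<le> b" "f holomorphic_on hank_domain"
  shows "f contour_integrable_on contour_piece \<gamma> a b"
  using assms
  by (intro contour_integrable_holomorphic_simple[OF _ open_hank_domain valid_path_contour_piece])
    (auto simp: path_image_contour_piece hankel_contour_def)

lemma contour_integral_contour_piece_combine:
  assumes "hankel_contour \<gamma>" "f holomorphic_on hank_domain" "a \<le> b" "b \<le> c"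
  shows "contour_integral (contour_piece \<gamma> a b) f + contour_integral (contour_piece \<gamma> b c) f
           = contour_integral (contour_piece \<gamma> a c) f"
proof -
  define u where "u = (b - a) / (c - a)"
  have u: "u \<in> {0..1}" and b: "a + (c - a) * u = b"
    using assms(3,4) by (auto simp: u_def divide_simps)
  have "contour_integral (subpath 0 u (contour_piece \<gamma> a c)) f
      + contour_integral (subpath u 1 (contour_piece \<gamma> a c)) f
      = contour_integral (subpath 0 1 (contour_piece \<gamma> a c)) f"
    using assms u
    by (intro contour_integral_subpath_combine contour_integrable_on_contour_piece
        valid_path_contour_piece) auto
  then show ?thesis
    by (simp add: subpath_contour_piece b)
qed

lemma contour_integral_contour_piece_primitive:
  assumes "hankel_contour \<gamma>" "a \<le> b" "\<gamma> ` {a..b} \<subseteq> S"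
    and "\<And>q. q \<in> S \<Longrightarrow> (G has_field_derivative f q) (at q)"
  shows "contour_integral (contour_piece \<gamma> a b) f = G (\<gamma> b) - G (\<gamma> a)"
proof -
  have "(f has_contour_integral
      G (pathfinish (contour_piece \<gamma> a b)) - G (pathstart (contour_piece \<gamma> a b))) (contour_piece \<gamma> a b)"
    using assms
    by (intro contour_integral_primitive[where S = S] valid_path_contour_piece)
      (auto intro: has_field_derivative_at_within simp: path_image_contour_piece)
  then show ?thesis
    by (simp add: contour_integral_unique pathstart_def pathfinish_def contour_piece_def)
qed

section \<open>Convergence of the contour integral\<close>

lemma hankel_contour_eventually_in_right_quadrant:
  assumes "hankel_contour \<gamma>"
  shows "eventually (\<lambda>s. \<gamma> s \<in> right_quadrant 1 a) at_bot"
    "eventually (\<lambda>s. \<gamma> s \<in> right_quadrant (- 1) a) at_top"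
proof -
  have "eventually (\<lambda>s. a < Re (\<gamma> s)) at_bot" "eventually (\<lambda>s. a < Re (\<gamma> s)) at_top"
    using assms by (simp_all add: hankel_contour_def filterlim_at_top_dense)
  moreover have "eventually (\<lambda>s. 0 < Im (\<gamma> s)) at_bot" "eventually (\<lambda>s. Im (\<gamma> s) < 0) at_top"
    using assms by (simp_all add: hankel_contour_def)
  ultimately show "eventually (\<lambda>s. \<gamma> s \<in> right_quadrant 1 a) at_bot"
    "eventually (\<lambda>s. \<gamma> s \<in> right_quadrant (- 1) a) at_top"
    by (auto simp: right_quadrant_def elim: eventually_elim2)
qed

lemma tendsto_hank_integrand_zero:
  assumes "Re z < Re \<mu> + 1" and "filterlim (\<lambda>s. Re (\<gamma> s)) at_top F"
  shows "((\<lambda>s. hank_integrand \<mu> z (\<gamma> s)) \<longlongrightarrow> 0) F"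
proof -
  define e where "e = Re z - Re \<mu> - 1"
  obtain C where C: "\<And>t. 5 \<le> norm t \<Longrightarrow> norm (hank_integrand \<mu> z t) \<le> C * norm t powr e"
    unfolding e_def using norm_hank_integrand_le by blast
  have norm_lim: "filterlim (\<lambda>s. norm (\<gamma> s)) at_top F"
    using assms(2) by (rule filterlim_at_top_mono) (simp add: complex_Re_le_cmod)
  show ?thesis
  proof (rule Lim_null_comparison)
    have "eventually (\<lambda>s. 5 \<le> norm (\<gamma> s)) F"
      using norm_lim by (simp add: filterlim_at_top)
    then show "eventually (\<lambda>s. norm (hank_integrand \<mu> z (\<gamma> s)) \<le> C * norm (\<gamma> s) powr e) F"
      by (rule eventually_mono) (rule C)
    show "((\<lambda>s. C * norm (\<gamma> s) powr e) \<longlongrightarrow> 0) F"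
      using assms(1) norm_lim by (intro tendsto_mult_right_zero tendsto_neg_powr) (auto simp: e_def)
  qed
qed

definition hank_partial_integral :: "(real \<Rightarrow> complex) \<Rightarrow> complex \<Rightarrow> complex \<Rightarrow> real \<Rightarrow> complex" where
  "hank_partial_integral \<gamma> \<mu> z R = contour_integral (hseg \<gamma> R) (hank_integrand \<mu> z)"

lemma hank_y_eq_Lim: "hank_y \<gamma> \<mu> z = Lim at_top (hank_partial_integral \<gamma> \<mu> z)"
  by (simp add: hank_y_def hank_partial_integral_def[abs_def])

lemma hank_partial_integral_split:
  assumes "hankel_contour \<gamma>" "0 \<le> R0" "R0 \<le> R"
  shows "hank_partial_integral \<gamma> \<mu> z R =
           contour_integral (contour_piece \<gamma> (- R) (- R0)) (hank_integrand \<mu> z)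
           + hank_partial_integral \<gamma> \<mu> z R0
           + contour_integral (contour_piece \<gamma> R0 R) (hank_integrand \<mu> z)"
  using assms holomorphic_hank_integrand
    contour_integral_contour_piece_combine[of \<gamma> "hank_integrand \<mu> z" "- R" "- R0" R]
    contour_integral_contour_piece_combine[of \<gamma> "hank_integrand \<mu> z" "- R0" R0 R]
  by (simp add: hank_partial_integral_def hseg_eq_contour_piece) (metis add.assoc)

lemma convergent_hank_primitive_along:
  assumes "Re z < Re \<mu>" "\<bar>\<sigma>\<bar> = 1"
    and "\<And>q. q \<in> right_quadrant \<sigma> 5 \<Longrightarrow> (G has_field_derivative hank_integrand \<mu> z q) (at q)"
    and "filterlim (\<lambda>s. Re (\<gamma> s)) at_top F" "eventually (\<lambda>s. \<gamma> s \<in> right_quadrant \<sigma> 5) F"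
    and "F \<noteq> bot"
  shows "\<exists>L. ((\<lambda>s. G (\<gamma> s)) \<longlongrightarrow> L) F"
proof -
  obtain C where "C > 0" and C: "\<And>t. 5 \<le> norm t \<Longrightarrow>
      norm (hank_integrand \<mu> z t) \<le> C * norm t powr (Re z - Re \<mu> - 1)"
    using norm_hank_integrand_le by blast
  show ?thesis
  proof (rule convergent_primitive_along[where e = "Re z - Re \<mu> - 1" and C = C,
        OF assms(2) _ _ assms(3) _ assms(4-6)])
    show "Re z - Re \<mu> - 1 < - 1" "0 \<le> C"
      using assms(1) \<open>C > 0\<close> by auto
    show "norm (hank_integrand \<mu> z q) \<le> C * norm q powr (Re z - Re \<mu> - 1)"
      if "q \<in> right_quadrant \<sigma> 5" for q
      using that complex_Re_le_cmod[of q] by (intro C) (auto simp: right_quadrant_def)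
  qed
qed

lemma hank_partial_integral_eq_primitives:
  assumes \<gamma>: "hankel_contour \<gamma>" and R: "0 \<le> R0" "R0 \<le> R"
    and Gp: "\<And>q. q \<in> S \<Longrightarrow> (Gp has_field_derivative hank_integrand \<mu> z q) (at q)"
      "\<And>s. s \<le> - R0 \<Longrightarrow> \<gamma> s \<in> S"
    and Gm: "\<And>q. q \<in> T \<Longrightarrow> (Gm has_field_derivative hank_integrand \<mu> z q) (at q)"
      "\<And>s. R0 \<le> s \<Longrightarrow> \<gamma> s \<in> T"
  shows "hank_partial_integral \<gamma> \<mu> z R =
           (Gp (\<gamma> (- R0)) - Gp (\<gamma> (- R))) + hank_partial_integral \<gamma> \<mu> z R0
           + (Gm (\<gamma> R) - Gm (\<gamma> R0))"
proof -
  have "contour_integral (contour_piece \<gamma> (- R) (- R0)) (hank_integrand \<mu> z)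
      = Gp (\<gamma> (- R0)) - Gp (\<gamma> (- R))"
    using R Gp(2) by (intro contour_integral_contour_piece_primitive[OF \<gamma> _ _ Gp(1)]) auto
  moreover have "contour_integral (contour_piece \<gamma> R0 R) (hank_integrand \<mu> z)
      = Gm (\<gamma> R) - Gm (\<gamma> R0)"
    using R Gm(2) by (intro contour_integral_contour_piece_primitive[OF \<gamma> _ _ Gm(1)]) auto
  ultimately show ?thesis
    using hank_partial_integral_split[OF \<gamma> R] by simp
qed

lemma tendsto_hank_y:
  assumes "Re z < Re \<mu>" and \<gamma>: "hankel_contour \<gamma>"
  shows "(hank_partial_integral \<gamma> \<mu> z \<longlongrightarrow> hank_y \<gamma> \<mu> z) at_top"
proof -
  obtain Gp where Gp: "\<And>q. q \<in> right_quadrant 1 5 \<Longrightarrow>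
      (Gp has_field_derivative hank_integrand \<mu> z q) (at q)"
    using holomorphic_primitive_on_right_quadrant[OF holomorphic_hank_integrand] by blast
  obtain Gm where Gm: "\<And>q. q \<in> right_quadrant (- 1) 5 \<Longrightarrow>
      (Gm has_field_derivative hank_integrand \<mu> z q) (at q)"
    using holomorphic_primitive_on_right_quadrant[OF holomorphic_hank_integrand] by blast
  note in_quadrant = hankel_contour_eventually_in_right_quadrant[OF \<gamma>, of 5]
  obtain Lp where Lp: "((\<lambda>s. Gp (\<gamma> s)) \<longlongrightarrow> Lp) at_bot"
    using convergent_hank_primitive_along[OF assms(1) _ Gp _ in_quadrant(1)] \<gamma>
    by (auto simp: hankel_contour_def)
  obtain Lm where Lm: "((\<lambda>s. Gm (\<gamma> s)) \<longlongrightarrow> Lm) at_top"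
    using convergent_hank_primitive_along[OF assms(1) _ Gm _ in_quadrant(2)] \<gamma>
    by (auto simp: hankel_contour_def)
  obtain R0 where R0: "0 \<le> R0" "\<And>s. s \<le> - R0 \<Longrightarrow> \<gamma> s \<in> right_quadrant 1 5"
    "\<And>s. R0 \<le> s \<Longrightarrow> \<gamma> s \<in> right_quadrant (- 1) 5"
  proof -
    obtain N1 N2 where "\<And>s. s \<le> N1 \<Longrightarrow> \<gamma> s \<in> right_quadrant 1 5"
      "\<And>s. N2 \<le> s \<Longrightarrow> \<gamma> s \<in> right_quadrant (- 1) 5"
      using in_quadrant by (auto simp: eventually_at_bot_linorder eventually_at_top_linorder)
    then show ?thesis
      by (intro that[of "max 0 (max (- N1) N2)"]) auto
  qed
  define I where "I = hank_partial_integral \<gamma> \<mu> z"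
  have "((\<lambda>R. (Gp (\<gamma> (- R0)) - Gp (\<gamma> (- R))) + I R0 + (Gm (\<gamma> R) - Gm (\<gamma> R0)))
      \<longlongrightarrow> (Gp (\<gamma> (- R0)) - Lp) + I R0 + (Lm - Gm (\<gamma> R0))) at_top"
    using filterlim_compose[OF Lp filterlim_uminus_at_bot_at_top] Lm by (intro tendsto_intros) auto
  moreover have "eventually (\<lambda>R. (Gp (\<gamma> (- R0)) - Gp (\<gamma> (- R))) + I R0 + (Gm (\<gamma> R) - Gm (\<gamma> R0))
      = I R) at_top"
    using eventually_ge_at_top[of R0] unfolding I_def
    by (rule eventually_mono)
      (rule hank_partial_integral_eq_primitives[OF \<gamma> R0(1) _ Gp R0(2) Gm R0(3), symmetric])
  ultimately have "(I \<longlongrightarrow> (Gp (\<gamma> (- R0)) - Lp) + I R0 + (Lm - Gm (\<gamma> R0))) at_top"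
    by (rule Lim_transform_eventually)
  then show ?thesis
    by (simp add: I_def hank_y_eq_Lim tendsto_Lim)
qed

section \<open>The difference equations\<close>

lemma contour_integrable_hank_integrand_hseg:
  assumes "hankel_contour \<gamma>" "0 \<le> R"
  shows "hank_integrand \<mu> z contour_integrable_on hseg \<gamma> R"
  unfolding hseg_eq_contour_piece using assms
  by (intro contour_integrable_on_contour_piece holomorphic_hank_integrand) auto

lemma hank_partial_integral_recurrence:
  assumes "hankel_contour \<gamma>" "0 \<le> R"
  shows "hank_partial_integral \<gamma> \<mu> z R = hank_partial_integral \<gamma> \<mu> (z - 1) R
           + (hank_partial_integral \<gamma> (\<mu> - 1) (z - 1) R
              - hank_partial_integral \<gamma> (\<mu> + 1) (z - 1) R) / 2"
proof -
  have "path_image (hseg \<gamma> R) \<subseteq> hank_domain"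
    using assms by (auto simp: hseg_eq_contour_piece path_image_contour_piece hankel_contour_def)
  then have "hank_partial_integral \<gamma> \<mu> z R = contour_integral (hseg \<gamma> R)
      (\<lambda>t. hank_integrand \<mu> (z - 1) t
        + (hank_integrand (\<mu> - 1) (z - 1) t - hank_integrand (\<mu> + 1) (z - 1) t) / 2)"
    unfolding hank_partial_integral_def
    by (intro contour_integral_eq hank_integrand_recurrence) auto
  also have "\<dots> = hank_partial_integral \<gamma> \<mu> (z - 1) R
      + (hank_partial_integral \<gamma> (\<mu> - 1) (z - 1) R - hank_partial_integral \<gamma> (\<mu> + 1) (z - 1) R) / 2"
    unfolding hank_partial_integral_def
    by (intro contour_integral_unique has_contour_integral_add has_contour_integral_div
        has_contour_integral_diff has_contour_integral_integral
        contour_integrable_hank_integrand_hseg assms)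
  finally show ?thesis .
qed

lemma hank_partial_integral_derivative_identity:
  assumes "hankel_contour \<gamma>" "0 \<le> R"
  shows "- \<mu> * hank_partial_integral \<gamma> \<mu> z R
           + z / 2 * (hank_partial_integral \<gamma> (\<mu> - 1) (z - 1) R
                      + hank_partial_integral \<gamma> (\<mu> + 1) (z - 1) R)
         = hank_integrand (\<mu> - 1) z (\<gamma> R) - hank_integrand (\<mu> - 1) z (\<gamma> (- R))"
proof -
  define f where "f t = - \<mu> * hank_integrand \<mu> z t
    + z / 2 * (hank_integrand (\<mu> - 1) (z - 1) t + hank_integrand (\<mu> + 1) (z - 1) t)" for t
  have "contour_integral (hseg \<gamma> R) f
      = hank_integrand (\<mu> - 1) z (\<gamma> R) - hank_integrand (\<mu> - 1) z (\<gamma> (- R))"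
    unfolding hseg_eq_contour_piece f_def using assms
    by (intro contour_integral_contour_piece_primitive has_field_derivative_hank_integrand_pred_nu)
      (auto simp: hankel_contour_def)
  moreover have "contour_integral (hseg \<gamma> R) f = - \<mu> * hank_partial_integral \<gamma> \<mu> z R
      + z / 2 * (hank_partial_integral \<gamma> (\<mu> - 1) (z - 1) R
                 + hank_partial_integral \<gamma> (\<mu> + 1) (z - 1) R)"
    unfolding hank_partial_integral_def f_def
    by (intro contour_integral_unique has_contour_integral_add has_contour_integral_lmul
        has_contour_integral_integral contour_integrable_hank_integrand_hseg assms)
  ultimately show ?thesis
    by simp
qed

lemma hank_y_recurrence:
  assumes "Re z < Re \<mu>" "hankel_contour \<gamma>"
  shows "hank_y \<gamma> \<mu> z
           = hank_y \<gamma> \<mu> (z - 1) + (hank_y \<gamma> (\<mu> - 1) (z - 1) - hank_y \<gamma> (\<mu> + 1) (z - 1)) / 2"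
proof (rule tendsto_unique[OF trivial_limit_at_top_linorder tendsto_hank_y[OF assms]])
  define I where "I = hank_partial_integral \<gamma>"
  have "((\<lambda>R. I \<mu> (z - 1) R + (I (\<mu> - 1) (z - 1) R - I (\<mu> + 1) (z - 1) R) / 2) \<longlongrightarrow>
      hank_y \<gamma> \<mu> (z - 1) + (hank_y \<gamma> (\<mu> - 1) (z - 1) - hank_y \<gamma> (\<mu> + 1) (z - 1)) / 2) at_top"
    unfolding I_def using assms by (intro tendsto_intros tendsto_hank_y) auto
  moreover have "eventually (\<lambda>R. I \<mu> (z - 1) R + (I (\<mu> - 1) (z - 1) R - I (\<mu> + 1) (z - 1) R) / 2
      = I \<mu> z R) at_top"
    using eventually_ge_at_top[of 0] unfolding I_def
    by (rule eventually_mono) (rule hank_partial_integral_recurrence[OF assms(2), symmetric])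
  ultimately show "(hank_partial_integral \<gamma> \<mu> z \<longlongrightarrow>
      hank_y \<gamma> \<mu> (z - 1) + (hank_y \<gamma> (\<mu> - 1) (z - 1) - hank_y \<gamma> (\<mu> + 1) (z - 1)) / 2) at_top"
    unfolding I_def by (rule Lim_transform_eventually)
qed

lemma hank_y_derivative_identity:
  assumes "Re z < Re \<mu>" "hankel_contour \<gamma>"
  shows "- \<mu> * hank_y \<gamma> \<mu> z + z / 2 * (hank_y \<gamma> (\<mu> - 1) (z - 1) + hank_y \<gamma> (\<mu> + 1) (z - 1)) = 0"
proof -
  define I where "I = hank_partial_integral \<gamma>"
  define D where "D R = - \<mu> * I \<mu> z R + z / 2 * (I (\<mu> - 1) (z - 1) R + I (\<mu> + 1) (z - 1) R)" for R
  have "(D \<longlongrightarrow> - \<mu> * hank_y \<gamma> \<mu> z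
      + z / 2 * (hank_y \<gamma> (\<mu> - 1) (z - 1) + hank_y \<gamma> (\<mu> + 1) (z - 1))) at_top"
    unfolding D_def I_def using assms by (intro tendsto_intros tendsto_hank_y) auto
  moreover have "(D \<longlongrightarrow> 0) at_top"
  proof -
    have "filterlim (\<lambda>R. Re (\<gamma> R)) at_top at_top" "filterlim (\<lambda>R. Re (\<gamma> (- R))) at_top at_top"
      using assms(2) filterlim_compose[OF _ filterlim_uminus_at_bot_at_top]
      by (auto simp: hankel_contour_def)
    then have "((\<lambda>R. hank_integrand (\<mu> - 1) z (\<gamma> R) - hank_integrand (\<mu> - 1) z (\<gamma> (- R)))
        \<longlongrightarrow> 0 - 0) at_top"
      using assms(1) by (intro tendsto_diff tendsto_hank_integrand_zero) auto
    moreover have "eventually (\<lambda>R. hank_integrand (\<mu> - 1) z (\<gamma> R)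
        - hank_integrand (\<mu> - 1) z (\<gamma> (- R)) = D R) at_top"
      using eventually_ge_at_top[of 0] unfolding D_def I_def
      by (rule eventually_mono)
        (rule hank_partial_integral_derivative_identity[OF assms(2), symmetric])
    ultimately show ?thesis
      using Lim_transform_eventually by fastforce
  qed
  ultimately show ?thesis
    by (rule tendsto_unique[OF trivial_limit_at_top_linorder])
qed

lemma hank_y_delay_equations:
  assumes "Re x < Re \<nu>" "hankel_contour \<gamma>"
  shows "x * (hank_y \<gamma> \<nu> x - hank_y \<gamma> \<nu> (x - 1)) + \<nu> * hank_y \<gamma> \<nu> x
           - x * hank_y \<gamma> (\<nu> - 1) (x - 1) = 0"
    "x * (hank_y \<gamma> \<nu> x - hank_y \<gamma> \<nu> (x - 1)) - \<nu> * hank_y \<gamma> \<nu> x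
           + x * hank_y \<gamma> (\<nu> + 1) (x - 1) = 0"
proof -
  define a b p m where "a = hank_y \<gamma> \<nu> x" and "b = hank_y \<gamma> \<nu> (x - 1)"
    and "p = hank_y \<gamma> (\<nu> - 1) (x - 1)" and "m = hank_y \<gamma> (\<nu> + 1) (x - 1)"
  have rec: "a - (b + (p - m) / 2) = 0" and der: "- \<nu> * a + x / 2 * (p + m) = 0"
    using hank_y_recurrence[OF assms] hank_y_derivative_identity[OF assms]
    by (simp_all add: a_def b_def p_def m_def)
  have "x * (a - b) + \<nu> * a - x * p = x * (a - (b + (p - m) / 2)) - (- \<nu> * a + x / 2 * (p + m))"
    "x * (a - b) - \<nu> * a + x * m = x * (a - (b + (p - m) / 2)) + (- \<nu> * a + x / 2 * (p + m))"
    by (simp_all add: field_simps)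
  then have "x * (a - b) + \<nu> * a - x * p = 0" "x * (a - b) - \<nu> * a + x * m = 0"
    by (simp_all only: rec der mult_zero_right diff_zero add_0_right)
  then show "x * (hank_y \<gamma> \<nu> x - hank_y \<gamma> \<nu> (x - 1)) + \<nu> * hank_y \<gamma> \<nu> x
           - x * hank_y \<gamma> (\<nu> - 1) (x - 1) = 0"
    "x * (hank_y \<gamma> \<nu> x - hank_y \<gamma> \<nu> (x - 1)) - \<nu> * hank_y \<gamma> \<nu> x
           + x * hank_y \<gamma> (\<nu> + 1) (x - 1) = 0"
    by (simp_all only: a_def b_def p_def m_def)
qed

lemma difference_bessel_of_delay_equations:
  fixes a b c p q x \<nu> :: "'a :: comm_ring_1"
  assumes "x * (a - b) + \<nu> * a - x * p = 0"
    and "(x - 1) * (b - c) + \<nu> * b - (x - 1) * q = 0"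
    and "(x - 1) * (p - q) - (\<nu> - 1) * p + (x - 1) * c = 0"
  shows "x * (x - 1) * (a - 2 * b + c) + x * (a - b) + x * (x - 1) * c - \<nu>\<^sup>2 * a = 0"
proof -
  have "x * (x - 1) * (a - 2 * b + c) + x * (a - b) + x * (x - 1) * c - \<nu>\<^sup>2 * a
      = x * ((x - 1) * (p - q) - (\<nu> - 1) * p + (x - 1) * c)
        - x * ((x - 1) * (b - c) + \<nu> * b - (x - 1) * q)
        + (x - \<nu>) * (x * (a - b) + \<nu> * a - x * p)"
    by (simp add: algebra_simps power2_eq_square)
  then show ?thesis
    using assms by simp
qed

theorem mainTheorem7:
  fixes \<gamma> :: "real \<Rightarrow> complex" and \<nu> x :: complex
  assumes "Re x < Re \<nu>"
    and "hankel_contour \<gamma>"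
    and "((\<lambda>s. powU (\<gamma> s) (- \<nu>) * (wB (\<gamma> s) powr x)) \<longlongrightarrow> 0) at_bot"
    and "((\<lambda>s. powU (\<gamma> s) (- \<nu>) * (wB (\<gamma> s) powr x)) \<longlongrightarrow> 0) at_top"
  shows "x * (hank_y \<gamma> \<nu> x - hank_y \<gamma> \<nu> (x - 1)) + \<nu> * hank_y \<gamma> \<nu> x
           - x * hank_y \<gamma> (\<nu> - 1) (x - 1) = 0 \<and>
         x * (hank_y \<gamma> \<nu> x - hank_y \<gamma> \<nu> (x - 1)) - \<nu> * hank_y \<gamma> \<nu> x
           + x * hank_y \<gamma> (\<nu> + 1) (x - 1) = 0 \<and>
         x * (x - 1) * (hank_y \<gamma> \<nu> x - 2 * hank_y \<gamma> \<nu> (x - 1) + hank_y \<gamma> \<nu> (x - 2))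
           + x * (hank_y \<gamma> \<nu> x - hank_y \<gamma> \<nu> (x - 1))
           + x * (x - 1) * hank_y \<gamma> \<nu> (x - 2) - \<nu>\<^sup>2 * hank_y \<gamma> \<nu> x = 0"
proof -
  note delay = hank_y_delay_equations[OF assms(1,2)]
  have shift: "x - 1 - 1 = x - 2" "\<nu> - 1 + 1 = \<nu>"
    by simp_all
  have "Re (x - 1) < Re \<nu>" "Re (x - 1) < Re (\<nu> - 1)"
    using assms(1) by simp_all
  from hank_y_delay_equations(1)[OF this(1) assms(2)] hank_y_delay_equations(2)[OF this(2) assms(2)]
  have "(x - 1) * (hank_y \<gamma> \<nu> (x - 1) - hank_y \<gamma> \<nu> (x - 2)) + \<nu> * hank_y \<gamma> \<nu> (x - 1)
      - (x - 1) * hank_y \<gamma> (\<nu> - 1) (x - 2) = 0"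
    "(x - 1) * (hank_y \<gamma> (\<nu> - 1) (x - 1) - hank_y \<gamma> (\<nu> - 1) (x - 2))
      - (\<nu> - 1) * hank_y \<gamma> (\<nu> - 1) (x - 1) + (x - 1) * hank_y \<gamma> \<nu> (x - 2) = 0"
    unfolding shift .
  then show ?thesis
    using delay difference_bessel_of_delay_equations[OF delay(1)] by blast
qed

end
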